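(* Let $k\ge 3$. For $i=1,2$ let $m_i\ge 2$ and $r_i\ge 1$ be integers and suppose $\mathcal{C}_i$ is a coloring of $\mathbb{Z}_{m_i}\setminus\{0\}$ with $r_i$ colors such that, for every choice of one of the $r_i$ colors for $0$, the resulting coloring of $\mathbb{Z}_{m_i}$ contains no nontrivial monochromatic $k$-AP. Then there is a coloring of $\mathbb{Z}_{m_1m_2}\setminus\{0\}$ with $r_1r_2$ colors such that, for every choice of one of the $r_1r_2$ colors for $0$, the resulting coloring of $\mathbb{Z}_{m_1m_2}$ contains no nontrivial monochromatic $k$-AP.
   Context: A $k$-AP in $\mathbb{Z}_m$ is a sequence $a,a+d,\ldots,a+(k-1)d$ with $a,d\in\mathbb{Z}_m$; it is trivial if $d\equiv 0\pmod m$ (equivalently all terms are equal) and nontrivial otherwise. A progression is monochromatic if all its terms receive the same color. *)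

theory Defs
  imports Main
begin

text \<open>Z_m is represented by the residues {0..<m} with arithmetic mod m.\<close>

definition has_nontrivial_mono_AP :: "nat \<Rightarrow> nat \<Rightarrow> (nat \<Rightarrow> nat) \<Rightarrow> bool" where
  "has_nontrivial_mono_AP k m c \<longleftrightarrow>
     (\<exists>a<m. \<exists>d<m. d \<noteq> 0 \<and> (\<forall>i<k. c ((a + i * d) mod m) = c a))"

definition good_coloring :: "nat \<Rightarrow> nat \<Rightarrow> nat \<Rightarrow> (nat \<Rightarrow> nat) \<Rightarrow> bool" where
  "good_coloring k m r c \<longleftrightarrow>
     (\<forall>x\<in>{1..<m}. c x < r) \<and>
     (\<forall>j<r. \<not> has_nontrivial_mono_AP k m (c(0 := j)))"

end

theory Submission
  imports Defs
begin

(* Identify Z_(m1*m2) with Z_m1 x Z_m2 via x |-> (x div m2, x mod m2) and colour x by the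
   mixed-radix pair  c1(x div m2) * r2 + c2(x mod m2),  where 0 gets colour 0 in each
   factor.  Given a nontrivial monochromatic AP a + i*d in Z_(m1*m2) (with 0 recoloured
   arbitrarily):
   - if d is not 0 mod m2, reducing mod m2 gives a nontrivial AP in Z_m2 that is
     monochromatic for c2 once 0 is given the common "mod r2" colour digit;
   - if d = m2*e, then e is nonzero mod m1 and taking div m2 gives a nontrivial AP in Z_m1
     with difference e that is monochromatic for c1 once 0 gets the "div r2" colour digit.
   Either way one factor colouring would fail to be good. *)

lemma AP_mod_residue:
  fixes a d i m1 m2 :: nat
  shows "(a + i * d) mod (m1 * m2) mod m2 = (a mod m2 + i * (d mod m2)) mod m2"
proof -
  have "(a + i * d) mod (m1 * m2) mod m2 = (a + i * d) mod m2"
    by (simp add: mod_mod_cancel)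
  also have "\<dots> = (a mod m2 + i * (d mod m2)) mod m2"
    by (metis mod_add_cong mod_mod_trivial mod_mult_right_eq)
  finally show ?thesis .
qed

lemma AP_div_quotient:
  fixes a e i m1 m2 :: nat
  assumes "m2 > 0"
  shows "(a + i * (m2 * e)) mod (m1 * m2) div m2 = (a div m2 + i * e) mod m1"
proof -
  have split: "x mod (m1 * m2) div m2 = x div m2 mod m1" for x :: nat
    using mod_mult2_eq[of x m2 m1] assms by (simp add: mult.commute)
  have "(a + (i * e) * m2) div m2 = i * e + a div m2"
    using assms by (intro div_mult_self1) simp
  then have "(a + i * (m2 * e)) div m2 = a div m2 + i * e"
    by (simp add: ac_simps)
  then show ?thesis using split by simp
qed

lemma mono_AP_from_residues:
  fixes h :: "nat \<Rightarrow> nat"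
  assumes "m2 > 0" and "d mod m2 \<noteq> 0"
    and mono: "\<forall>i<k. h ((a + i * d) mod (m1 * m2) mod m2) = h (a mod m2)"
  shows "has_nontrivial_mono_AP k m2 h"
  unfolding has_nontrivial_mono_AP_def
proof (intro exI conjI allI impI)
  show "a mod m2 < m2" "d mod m2 < m2" using \<open>m2 > 0\<close> by auto
  show "d mod m2 \<noteq> 0" by fact
  fix i assume "i < k"
  then show "h ((a mod m2 + i * (d mod m2)) mod m2) = h (a mod m2)"
    using mono by (simp add: AP_mod_residue)
qed

lemma mono_AP_from_quotients:
  fixes h :: "nat \<Rightarrow> nat"
  assumes "m2 > 0" and "a < m1 * m2" and "d < m1 * m2" and "d \<noteq> 0" and "d mod m2 = 0"
    and mono: "\<forall>i<k. h ((a + i * d) mod (m1 * m2) div m2) = h (a div m2)"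
  shows "has_nontrivial_mono_AP k m1 h"
  unfolding has_nontrivial_mono_AP_def
proof (intro exI conjI allI impI)
  define e where "e = d div m2"
  have d_eq: "d = m2 * e"
    unfolding e_def using mult_div_mod_eq[of m2 d] \<open>d mod m2 = 0\<close> by simp
  show "a div m2 < m1" "e < m1" "e \<noteq> 0"
    using assms d_eq by (auto simp: less_mult_imp_div_less)
  fix i assume "i < k"
  then show "h ((a div m2 + i * e) mod m1) = h (a div m2)"
    using mono AP_div_quotient[OF \<open>m2 > 0\<close>] d_eq by metis
qed

definition product_coloring ::
    "nat \<Rightarrow> nat \<Rightarrow> (nat \<Rightarrow> nat) \<Rightarrow> (nat \<Rightarrow> nat) \<Rightarrow> nat \<Rightarrow> nat" where
  "product_coloring m2 r2 c1 c2 x = (c1(0 := 0)) (x div m2) * r2 + (c2(0 := 0)) (x mod m2)"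

context
  fixes m2 r2 :: nat and c1 c2 :: "nat \<Rightarrow> nat"
  assumes m2_pos: "m2 > 0"
    and c2_bound: "\<forall>x\<in>{1..<m2}. c2 x < r2" and r2_pos: "r2 \<ge> 1"
begin

lemma low_digit_bound: "(c2(0 := 0)) (x mod m2) < r2"
  using c2_bound m2_pos r2_pos by auto

text \<open>The low digit of the product colour (base r2) records the c2-colour of the residue
  mod m2; hence, after recolouring 0 in Z_m2 with a given digit v, every point whose low
  digit is v maps to a point of colour v.\<close>
lemma residue_recolor:
  assumes "((product_coloring m2 r2 c1 c2)(0 := j)) z mod r2 = v"
  shows "(c2(0 := v)) (z mod m2) = v"
  using assms low_digit_bound[of z] by (auto simp: product_coloring_def split: if_splits)

text \<open>Likewise the high digit records the c1-colour of the quotient by m2.\<close>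
lemma quotient_recolor:
  assumes "((product_coloring m2 r2 c1 c2)(0 := j)) z div r2 = u"
  shows "(c1(0 := u)) (z div m2) = u"
  using assms low_digit_bound[of z] by (auto simp: product_coloring_def split: if_splits)

end

lemma product_coloring_bound:
  assumes "m2 > 0" and "r1 \<ge> 1" and "r2 \<ge> 1"
    and c1_bound: "\<forall>x\<in>{1..<m1}. c1 x < r1" and c2_bound: "\<forall>x\<in>{1..<m2}. c2 x < r2"
    and "x < m1 * m2"
  shows "product_coloring m2 r2 c1 c2 x < r1 * r2"
proof -
  have "x div m2 < m1" using assms by (simp add: less_mult_imp_div_less)
  then have "(c1(0 := 0)) (x div m2) + 1 \<le> r1" using c1_bound \<open>r1 \<ge> 1\<close>
    by (auto simp: Suc_le_eq)
  then have "((c1(0 := 0)) (x div m2) + 1) * r2 \<le> r1 * r2"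
    by (rule mult_right_mono) simp
  then show ?thesis
    using low_digit_bound[OF \<open>m2 > 0\<close> c2_bound \<open>r2 \<ge> 1\<close>, of x]
    unfolding product_coloring_def by simp
qed

lemma product_coloring_good:
  assumes "m2 > 0" and "r1 \<ge> 1" and "r2 \<ge> 1"
    and good1: "good_coloring k m1 r1 c1" and good2: "good_coloring k m2 r2 c2"
  shows "good_coloring k (m1 * m2) (r1 * r2) (product_coloring m2 r2 c1 c2)"
proof -
  let ?M = "m1 * m2" and ?c = "product_coloring m2 r2 c1 c2"
  have c1_bound: "\<forall>x\<in>{1..<m1}. c1 x < r1"
    and no_AP1: "\<forall>u<r1. \<not> has_nontrivial_mono_AP k m1 (c1(0 := u))"
    using good1 unfolding good_coloring_def by auto
  have c2_bound: "\<forall>x\<in>{1..<m2}. c2 x < r2"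
    and no_AP2: "\<forall>v<r2. \<not> has_nontrivial_mono_AP k m2 (c2(0 := v))"
    using good2 unfolding good_coloring_def by auto
  note bound = product_coloring_bound[OF assms(1-3) c1_bound c2_bound]
  have "\<not> has_nontrivial_mono_AP k ?M (?c(0 := j))" if "j < r1 * r2" for j
  proof
    let ?C = "?c(0 := j)"
    assume "has_nontrivial_mono_AP k ?M ?C"
    then obtain a d where "a < ?M" "d < ?M" "d \<noteq> 0"
      and mono: "\<forall>i<k. ?C ((a + i * d) mod ?M) = ?C a"
      unfolding has_nontrivial_mono_AP_def by blast
    show False
    proof (cases "d mod m2 = 0")
      case False
      define v where "v = ?C a mod r2"
      have "has_nontrivial_mono_AP k m2 (c2(0 := v))"
        using mono_AP_from_residues[OF \<open>m2 > 0\<close> False]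
          residue_recolor[OF \<open>m2 > 0\<close> c2_bound \<open>r2 \<ge> 1\<close>] mono
        unfolding v_def by metis
      moreover have "v < r2" unfolding v_def using \<open>r2 \<ge> 1\<close> by simp
      ultimately show False using no_AP2 by blast
    next
      case True
      define u where "u = ?C a div r2"
      have "has_nontrivial_mono_AP k m1 (c1(0 := u))"
        using mono_AP_from_quotients[OF \<open>m2 > 0\<close> \<open>a < ?M\<close> \<open>d < ?M\<close> \<open>d \<noteq> 0\<close> True]
          quotient_recolor[OF \<open>m2 > 0\<close> c2_bound \<open>r2 \<ge> 1\<close>] mono
        unfolding u_def by metis
      moreover have "?C a < r1 * r2" using bound \<open>a < ?M\<close> \<open>j < r1 * r2\<close> by simp
      then have "u < r1" unfolding u_def by (simp add: less_mult_imp_div_less)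
      ultimately show False using no_AP1 by blast
    qed
  qed
  then show ?thesis unfolding good_coloring_def using bound by auto
qed

theorem mainTheorem4:
  fixes k m1 m2 r1 r2 :: nat and c1 c2 :: "nat \<Rightarrow> nat"
  assumes "k \<ge> 3"
    and "m1 \<ge> 2" and "m2 \<ge> 2" and "r1 \<ge> 1" and "r2 \<ge> 1"
    and "good_coloring k m1 r1 c1" and "good_coloring k m2 r2 c2"
  shows "\<exists>c. good_coloring k (m1 * m2) (r1 * r2) c"
proof -
  have "m2 > 0" using \<open>m2 \<ge> 2\<close> by simp
  then show ?thesis using product_coloring_good assms(4-7) by blast
qed

end
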